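(* Let $t\geq 6$ with $t\equiv 2\pmod 4$, and let $c$ be a positive odd integer, written as $c=tk+d$ with $k\geq 0$ and $0\leq d<t$. Then the multiset $\{1,2^b,t^{c}\}$ admits a linear realization for every $b\geq t-1$ if $d\equiv 1\pmod 4$, and for every $b\geq t-2$ if $d\equiv 3\pmod 4$.
   Context: $\{1,2^b,t^{c}\}$ is the multiset with one $1$, $b$ copies of $2$ and $c$ copies of $t$. For a multiset $L$ of positive integers with $|L|=v-1$, each at most $v-1$, a linear realization of $L$ is a Hamiltonian path $[x_0,\dots,x_{v-1}]$ of the complete graph on $\{0,\dots,v-1\}$ such that the multiset $\{|x_i-x_{i+1}| : i=0,\dots,v-2\}$ equals $L$. *)

theory Defs
  imports Main "HOL-Library.Multiset"
begin

definition diff_mset :: "nat list \<Rightarrow> nat multiset" where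
  "diff_mset xs = mset (map (\<lambda>i. nat \<bar>int (xs ! i) - int (xs ! Suc i)\<bar>) [0..<length xs - 1])"

text \<open>A linear realization of the multiset L (with v = size L + 1 vertices) is a
Hamiltonian path [x_0,...,x_{v-1}] of the complete graph on {0,...,v-1}, i.e. an
ordering of {0,...,v-1}, whose multiset of edge lengths |x_i - x_{i+1}| equals L.\<close>
definition linear_realization :: "nat multiset \<Rightarrow> nat list \<Rightarrow> bool" where
  "linear_realization L xs \<longleftrightarrow>
     length xs = size L + 1 \<and> distinct xs \<and> set xs = {0..<size L + 1} \<and> diff_mset xs = L"

definition has_linear_realization :: "nat multiset \<Rightarrow> bool" where
  "has_linear_realization L \<longleftrightarrow> (\<exists>xs. linear_realization L xs)"

definition mset_12t :: "nat \<Rightarrow> nat \<Rightarrow> nat \<Rightarrow> nat multiset" where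
  "mset_12t b t c = {#1#} + replicate_mset b 2 + replicate_mset c t"

end

theory Submission
  imports Defs
begin

text \<open>Write \<open>t = 2 * s\<close> with \<open>s\<close> odd. A realization on the \<open>v = b + c + 2\<close> vertices can be
taken to be a Hamiltonian path through the even vertices, one edge of length 1, and a Hamiltonian
path through the odd vertices. Halved, the two pieces are Hamiltonian paths of \<open>{0..<m}\<close> and
\<open>{0..<n}\<close>, \<open>m + n = v\<close>, \<open>m - n \<in> {0, 1}\<close>, whose edges have length 1 (the edges of length 2)
or \<open>s\<close> (the edges of length \<open>t\<close>). Such paths are boustrophedon traversals of the residue
classes modulo \<open>s\<close>: each class is run through in steps \<open>s\<close> and consecutive classes are joined by
unit steps, giving \<open>s - 1\<close> unit steps; more unit steps come from a final run of consecutive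
integers or from splitting one class. For \<open>b \<ge> t\<close> both halves can end at their top vertex; for
\<open>b = t - 1\<close> and \<open>b = t - 2\<close> the endpoints of the halves have to match, and for \<open>b = t - 2\<close>
this needs \<open>c mod t \<equiv> 3 (mod 4)\<close>.\<close>

section \<open>Difference multisets\<close>

definition absdiff :: "nat \<Rightarrow> nat \<Rightarrow> nat" where
  "absdiff a b = (if a \<le> b then b - a else a - b)"

fun diffs :: "nat list \<Rightarrow> nat multiset" where
  "diffs [] = {#}"
| "diffs [x] = {#}"
| "diffs (x # y # zs) = add_mset (absdiff x y) (diffs (y # zs))"

lemma absdiff_commute: "absdiff a b = absdiff b a"
  by (simp add: absdiff_def)

lemma absdiff_Suc [simp]: "absdiff a (Suc a) = 1" "absdiff (Suc a) a = 1"
  by (simp_all add: absdiff_def)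

lemma absdiff_pred: "0 < a \<Longrightarrow> absdiff a (a - 1) = 1" "0 < a \<Longrightarrow> absdiff (a - 1) a = 1"
  by (simp_all add: absdiff_def)

lemma diff_mset_eq_diffs: "diff_mset xs = diffs xs"
proof (induction xs rule: diffs.induct)
  case (3 x y zs)
  have "[0..<length (x # y # zs) - 1] = 0 # map Suc [0..<length (y # zs) - 1]"
    by (simp only: length_Cons diff_Suc_1 upt_conv_Cons[OF zero_less_Suc] map_Suc_upt)
  moreover have "nat \<bar>int x - int y\<bar> = absdiff x y"
    by (cases "x \<le> y") (auto simp: absdiff_def)
  ultimately show ?case
    using "3.IH" unfolding diff_mset_def by (simp add: o_def)
qed (simp_all add: diff_mset_def)

lemma size_diffs: "size (diffs xs) = length xs - 1"
  by (induction xs rule: diffs.induct) auto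

lemma diffs_append:
  "xs \<noteq> [] \<Longrightarrow> ys \<noteq> [] \<Longrightarrow> diffs (xs @ ys) = diffs xs + diffs ys + {#absdiff (last xs) (hd ys)#}"
  by (induction xs rule: diffs.induct) (auto simp: neq_Nil_conv)

lemma diffs_rev: "diffs (rev xs) = diffs xs"
proof (induction xs rule: diffs.induct)
  case (3 x y zs)
  have "diffs (rev (x # y # zs)) = diffs (rev (y # zs) @ [x])"
    by simp
  also have "\<dots> = diffs (rev (y # zs)) + {#absdiff y x#}"
    by (subst diffs_append) (auto simp: last_rev)
  finally show ?case using "3.IH" by (simp add: absdiff_commute)
qed auto

lemma diffs_map:
  assumes "\<And>a b. a \<in> set xs \<Longrightarrow> b \<in> set xs \<Longrightarrow> absdiff (f a) (f b) = g (absdiff a b)"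
  shows "diffs (map f xs) = image_mset g (diffs xs)"
  using assms by (induction xs rule: diffs.induct) auto

lemma diffs_upt: "diffs [a..<b] = replicate_mset (b - a - 1) 1"
proof (induction b)
  case (Suc b)
  show ?case
  proof (cases "a < b")
    case True
    then have "diffs [a..<Suc b] = diffs [a..<b] + {#1#}"
      by (simp add: diffs_append absdiff_def)
    moreover have "b - a = Suc (b - Suc a)"
      using True by simp
    ultimately show ?thesis using Suc by simp
  qed (simp add: le_Suc_eq)
qed simp

definition arith_prog :: "nat \<Rightarrow> nat \<Rightarrow> nat \<Rightarrow> nat list" where
  "arith_prog a s L = map (\<lambda>i. a + s * i) [0..<L]"

lemma arith_prog_0 [simp]: "arith_prog a s 0 = []"
  by (simp add: arith_prog_def)

lemma arith_prog_Suc: "arith_prog a s (Suc L) = a # arith_prog (a + s) s L"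
  unfolding arith_prog_def by (simp add: upt_conv_Cons map_Suc_upt[symmetric] del: upt_Suc)

lemma length_arith_prog [simp]: "length (arith_prog a s L) = L"
  by (simp add: arith_prog_def)

lemma arith_prog_eq_Nil_iff [simp]: "arith_prog a s L = [] \<longleftrightarrow> L = 0"
  by (simp add: arith_prog_def)

lemma hd_arith_prog: "L > 0 \<Longrightarrow> hd (arith_prog a s L) = a"
  by (cases L) (auto simp: arith_prog_Suc)

lemma last_arith_prog: "L > 0 \<Longrightarrow> last (arith_prog a s L) = a + s * (L - 1)"
  by (simp add: arith_prog_def last_map)

lemma set_arith_prog: "set (arith_prog a s L) = {a + s * i | i. i < L}"
  by (auto simp: arith_prog_def)

lemma distinct_arith_prog: "s > 0 \<Longrightarrow> distinct (arith_prog a s L)"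
  by (auto simp: arith_prog_def distinct_map inj_on_def)

lemma diffs_arith_prog: "diffs (arith_prog a s L) = replicate_mset (L - 1) s"
proof (induction L arbitrary: a)
  case (Suc L)
  then show ?case
    by (cases L) (simp_all add: arith_prog_Suc absdiff_def)
qed simp

section \<open>Linked runs\<close>

lemma replicate_mset_add: "replicate_mset (m + n) x = replicate_mset m x + replicate_mset n x"
  by (rule multiset_eqI) simp

fun linked :: "nat list list \<Rightarrow> bool" where
  "linked [] \<longleftrightarrow> True"
| "linked [g] \<longleftrightarrow> True"
| "linked (g # h # hs) \<longleftrightarrow> absdiff (last g) (hd h) = 1 \<and> linked (h # hs)"

lemma linked_append:
  assumes "linked gs" "linked hs" "absdiff (last (last gs)) (hd (hd hs)) = 1"
  shows "linked (gs @ hs)"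
  using assms
proof (induction gs rule: linked.induct)
  case (2 g)
  then show ?case by (cases hs) auto
qed auto

lemma linked_rev:
  "linked gs \<Longrightarrow> [] \<notin> set gs \<Longrightarrow> linked (rev (map rev gs))"
proof (induction gs rule: linked.induct)
  case (3 g h hs)
  have "rev (map rev (g # h # hs)) = rev (map rev (h # hs)) @ [rev g]"
    by simp
  also have "linked \<dots>"
  proof (rule linked_append)
    show "linked (rev (map rev (h # hs)))"
      using 3 by simp
    show "absdiff (last (last (rev (map rev (h # hs))))) (hd (hd [rev g])) = 1"
      using 3 by (simp add: last_rev hd_rev absdiff_commute)
  qed simp
  finally show ?case .
qed simp_all

lemma diffs_concat_linked:
  assumes "linked gs" "[] \<notin> set gs"
  shows "diffs (concat gs) = sum_list (map diffs gs) + replicate_mset (length gs - 1) 1"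
  using assms
proof (induction gs rule: linked.induct)
  case (3 g h hs)
  then have "diffs (g @ concat (h # hs)) = diffs g + diffs (concat (h # hs)) + {#absdiff (last g) (hd h)#}"
    by (subst diffs_append) auto
  then show ?case using 3 by simp
qed simp_all

definition step_run :: "nat \<Rightarrow> nat list \<Rightarrow> bool" where
  "step_run s g \<longleftrightarrow> g \<noteq> [] \<and> diffs g = replicate_mset (length g - 1) s"

lemma step_run_arith_prog: "L > 0 \<Longrightarrow> step_run s (arith_prog a s L)"
  by (simp add: step_run_def diffs_arith_prog)

lemma step_run_rev: "step_run s g \<Longrightarrow> step_run s (rev g)"
  by (simp add: step_run_def diffs_rev)

lemma step_run_singleton: "step_run s [a]"
  by (simp add: step_run_def)

lemma length_le_length_concat: "[] \<notin> set gs \<Longrightarrow> length gs \<le> length (concat gs)"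
proof (induction gs)
  case (Cons g gs)
  then show ?case by (cases g) auto
qed simp

lemma sum_diffs_step_runs:
  "\<forall>g\<in>set gs. step_run s g \<Longrightarrow> sum_list (map diffs gs) = replicate_mset (length (concat gs) - length gs) s"
proof (induction gs)
  case (Cons g gs)
  then have g: "g \<noteq> []" "diffs g = replicate_mset (length g - 1) s"
    by (auto simp: step_run_def)
  have "length gs \<le> length (concat gs)"
    using Cons.prems by (intro length_le_length_concat) (auto simp: step_run_def)
  then have "length g - 1 + (length (concat gs) - length gs) = length (concat (g # gs)) - length (g # gs)"
    using g by (cases g) auto
  then show ?case
    using Cons g by (simp add: replicate_mset_add[symmetric])
qed simp

section \<open>Hamiltonian paths with steps 1 and s\<close>

definition ham_path :: "nat \<Rightarrow> nat \<Rightarrow> nat list \<Rightarrow> nat \<Rightarrow> nat \<Rightarrow> bool" where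
  "ham_path s n p x y \<longleftrightarrow>
     distinct p \<and> set p = {0..<n} \<and> diffs p = replicate_mset x 1 + replicate_mset y s"

lemma ham_path_length: "ham_path s n p x y \<Longrightarrow> length p = n"
  unfolding ham_path_def using distinct_card[of p] by simp

lemma ham_path_edge_count: "ham_path s n p x y \<Longrightarrow> x + y = n - 1"
  using ham_path_length[of s n p x y] size_diffs[of p] unfolding ham_path_def by simp

lemma ham_path_rev: "ham_path s n p x y \<Longrightarrow> ham_path s n (rev p) x y"
  by (simp add: ham_path_def diffs_rev)

lemma ham_path_reflect:
  assumes "ham_path s n p x y"
  shows "ham_path s n (map (\<lambda>z. n - 1 - z) p) x y"
proof -
  have p: "distinct p" "set p = {0..<n}" "diffs p = replicate_mset x 1 + replicate_mset y s"
    using assms by (auto simp: ham_path_def)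
  have "inj_on (\<lambda>z. n - 1 - z) {0..<n}"
    by (auto simp: inj_on_def)
  moreover have "(\<lambda>z. n - 1 - z) ` {0..<n} = {0..<n}"
  proof (intro equalityI subsetI)
    fix z assume "z \<in> {0..<n}"
    then have "z = n - 1 - (n - 1 - z)" "n - 1 - z \<in> {0..<n}" by auto
    then show "z \<in> (\<lambda>z. n - 1 - z) ` {0..<n}" by blast
  qed auto
  moreover have "diffs (map (\<lambda>z. n - 1 - z) p) = image_mset id (diffs p)"
    by (rule diffs_map) (use p in \<open>auto simp: absdiff_def\<close>)
  ultimately show ?thesis
    using p by (simp add: ham_path_def distinct_map)
qed

lemma ham_path_append_upt:
  assumes p: "ham_path s N p x y" "last p = N - 1" "0 < N" "N < n"
  shows "ham_path s n (p @ [N..<n]) (x + (n - N)) y"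
proof -
  have p': "distinct p" "set p = {0..<N}" "diffs p = replicate_mset x 1 + replicate_mset y s"
    using p by (auto simp: ham_path_def)
  have "diffs (p @ [N..<n]) = diffs p + diffs [N..<n] + {#absdiff (last p) N#}"
    using p p' by (subst diffs_append) auto
  also have "\<dots> = replicate_mset x 1 + replicate_mset y s + replicate_mset (n - N - 1) 1 + {#1#}"
    using p p' by (simp add: diffs_upt absdiff_def)
  also have "\<dots> = replicate_mset (x + (n - N)) 1 + replicate_mset y s"
  proof -
    have "x + (n - N) = x + (n - N - 1) + 1" using p by simp
    then show ?thesis by (simp only: replicate_mset_add) (simp add: ac_simps)
  qed
  finally have "diffs (p @ [N..<n]) = replicate_mset (x + (n - N)) 1 + replicate_mset y s" .
  moreover have "distinct (p @ [N..<n])"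
    using p' by simp
  moreover have "set (p @ [N..<n]) = {0..<n}"
    using p p' ivl_disj_un_two(3)[of 0 N n] by simp
  ultimately show ?thesis
    by (simp add: ham_path_def)
qed

lemma ham_path_extend_upt:
  assumes "ham_path s N p x y" "last p = N - 1" "0 < N" "N \<le> n"
  obtains p' where "ham_path s n p' (x + (n - N)) y" "last p' = n - 1"
proof (cases "N = n")
  case False
  then show ?thesis
    using assms ham_path_append_upt[of s N p x y n] that[of "p @ [N..<n]"] by simp
qed (use assms that in simp)

lemma ham_path_concat:
  assumes "linked gs" "\<forall>g\<in>set gs. step_run s g" "mset (concat gs) = mset [0..<n]"
  shows "ham_path s n (concat gs) (length gs - 1) (n - length gs)"
proof -
  have len: "length (concat gs) = n"
    using arg_cong[OF assms(3), of size] by simp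
  have "[] \<notin> set gs"
    using assms(2) by (auto simp: step_run_def)
  then have "diffs (concat gs) = replicate_mset (n - length gs) s + replicate_mset (length gs - 1) 1"
    using diffs_concat_linked[OF assms(1)] sum_diffs_step_runs[OF assms(2)] len by simp
  moreover have "distinct (concat gs)"
    using mset_eq_imp_distinct_iff[OF assms(3)] by simp
  moreover have "set (concat gs) = {0..<n}"
    using mset_eq_setD[OF assms(3)] by simp
  ultimately show ?thesis
    by (simp add: ham_path_def add.commute)
qed

lemma doubles_union_shifted_doubles:
  assumes "m = n \<or> m = Suc n"
  shows "(\<lambda>x. 2 * x) ` {0..<m} \<union> (\<lambda>x. 2 * x + 1) ` {0..<n} = {0..<m + n}"
proof (intro equalityI subsetI)
  fix z assume "z \<in> {0..<m + n}"
  then have z: "z < m + n" by simp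
  show "z \<in> (\<lambda>x. 2 * x) ` {0..<m} \<union> (\<lambda>x. 2 * x + 1) ` {0..<n}"
  proof (cases "even z")
    case True
    then obtain k where "z = 2 * k" by blast
    moreover have "k < m" using z assms \<open>z = 2 * k\<close> by linarith
    ultimately show ?thesis by auto
  next
    case False
    then obtain k where "z = 2 * k + 1" using oddE by blast
    moreover have "k < n" using z assms \<open>z = 2 * k + 1\<close> by linarith
    ultimately show ?thesis by auto
  qed
qed (use assms in auto)

lemma has_linear_realization_interleave:
  assumes E: "ham_path s m pe xE yE" and O: "ham_path s n po xO yO"
    and mn: "m = n \<or> m = Suc n" "0 < n"
    and link: "absdiff (2 * last pe) (2 * hd po + 1) = 1"
  shows "has_linear_realization (mset_12t (xE + xO) (2 * s) (yE + yO))"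
proof -
  let ?pe = "map (\<lambda>x. 2 * x) pe" and ?po = "map (\<lambda>x. 2 * x + 1) po"
  have pe: "distinct pe" "set pe = {0..<m}" "diffs pe = replicate_mset xE 1 + replicate_mset yE s"
    using E by (auto simp: ham_path_def)
  have po: "distinct po" "set po = {0..<n}" "diffs po = replicate_mset xO 1 + replicate_mset yO s"
    using O by (auto simp: ham_path_def)
  have ne: "pe \<noteq> []" "po \<noteq> []"
    using mn ham_path_length[OF E] ham_path_length[OF O] by auto
  have "set ?pe \<inter> set ?po = {}"
    by auto presburger
  then have "distinct (?pe @ ?po)"
    using pe po by (simp add: distinct_map inj_on_def)
  moreover have "set (?pe @ ?po) = {0..<m + n}"
    using doubles_union_shifted_doubles[OF mn(1)] pe po by simp
  moreover have "diffs (?pe @ ?po) = mset_12t (xE + xO) (2 * s) (yE + yO)"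
  proof -
    have "diffs ?pe = image_mset ((*) 2) (diffs pe)"
      by (rule diffs_map) (auto simp: absdiff_def)
    moreover have "diffs ?po = image_mset ((*) 2) (diffs po)"
      by (rule diffs_map) (auto simp: absdiff_def)
    ultimately have "diffs (?pe @ ?po) = image_mset ((*) 2) (diffs pe) + image_mset ((*) 2) (diffs po) + {#1#}"
      using ne link by (simp add: diffs_append last_map hd_map)
    then show ?thesis
      unfolding pe(3) po(3) mset_12t_def by (simp add: replicate_mset_add ac_simps numeral_2_eq_2)
  qed
  moreover have "size (mset_12t (xE + xO) (2 * s) (yE + yO)) + 1 = m + n"
    using ham_path_edge_count[OF E] ham_path_edge_count[OF O] mn by (auto simp: mset_12t_def)
  ultimately have "linear_realization (mset_12t (xE + xO) (2 * s) (yE + yO)) (?pe @ ?po)"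
    using ham_path_length[OF E] ham_path_length[OF O]
    unfolding linear_realization_def diff_mset_eq_diffs by simp
  then show ?thesis
    unfolding has_linear_realization_def by blast
qed

lemma has_linear_realization_top_paths:
  assumes E: "ham_path s m pe xE yE" "last pe = m - 1"
    and O: "ham_path s n po xO yO" "last po = n - 1"
    and mn: "m = n \<or> m = Suc n" "0 < n"
  shows "has_linear_realization (mset_12t (xE + xO) (2 * s) (yE + yO))"
proof (rule has_linear_realization_interleave[OF E(1) ham_path_rev[OF O(1)] mn])
  have "po \<noteq> []"
    using ham_path_length[OF O(1)] mn by auto
  then show "absdiff (2 * last pe) (2 * hd (rev po) + 1) = 1"
    using E(2) O(2) mn by (auto simp: hd_rev absdiff_def)
qed

section \<open>Columns modulo s\<close>

text \<open>For \<open>n = q * s + r\<close> with \<open>r < s\<close>, the residue class of \<open>j < s\<close> in \<open>{0..<n}\<close> is the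
column \<open>j, j + s, \<dots>, col_top q s r j\<close>; \<open>col_seg\<close> runs through it upwards or downwards, and
the paths \<open>bous\<dots>\<close> below chain such segments in boustrophedon order.\<close>
definition col_len :: "nat \<Rightarrow> nat \<Rightarrow> nat \<Rightarrow> nat" where
  "col_len q r j = (if j < r then Suc q else q)"

definition column :: "nat \<Rightarrow> nat \<Rightarrow> nat \<Rightarrow> nat \<Rightarrow> nat list" where
  "column q s r j = arith_prog j s (col_len q r j)"

definition col_top :: "nat \<Rightarrow> nat \<Rightarrow> nat \<Rightarrow> nat \<Rightarrow> nat" where
  "col_top q s r j = (if j < r then j + s * q else j + s * q - s)"

definition col_seg :: "nat \<Rightarrow> nat \<Rightarrow> nat \<Rightarrow> nat \<Rightarrow> bool \<Rightarrow> nat list" where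
  "col_seg q s r j up = (if up then column q s r j else rev (column q s r j))"

abbreviation col_segs :: "nat \<Rightarrow> nat \<Rightarrow> nat \<Rightarrow> (nat \<Rightarrow> bool) \<Rightarrow> nat list \<Rightarrow> nat list list" where
  "col_segs q s r u js \<equiv> map (\<lambda>j. col_seg q s r j (u j)) js"

lemma col_top_less: "j < r \<Longrightarrow> col_top q s r j = j + s * q"
  by (simp add: col_top_def)

lemma col_top_ge: "r \<le> j \<Longrightarrow> col_top q s r j = j + s * q - s"
  by (simp add: col_top_def)

lemma col_top_Suc:
  assumes "0 < q" "Suc j \<noteq> r"
  shows "col_top q s r (Suc j) = Suc (col_top q s r j)"
proof -
  have "s \<le> j + s * q" using assms(1) by (simp add: trans_le_add2)
  then show ?thesis using assms(2) by (auto simp: col_top_def Suc_diff_le)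
qed

lemma col_seg_ne: "0 < q \<Longrightarrow> col_seg q s r j up \<noteq> []"
  by (simp add: col_seg_def column_def col_len_def)

lemma hd_col_seg: "0 < q \<Longrightarrow> hd (col_seg q s r j up) = (if up then j else col_top q s r j)"
  and last_col_seg: "0 < q \<Longrightarrow> last (col_seg q s r j up) = (if up then col_top q s r j else j)"
proof -
  assume q: "0 < q"
  have "s * (q - 1) = s * q - s" by (simp add: diff_mult_distrib2)
  then have "last (column q s r j) = col_top q s r j"
    using q by (simp add: column_def last_arith_prog col_len_def col_top_def)
  moreover have "hd (column q s r j) = j"
    using q by (simp add: column_def hd_arith_prog col_len_def)
  ultimately show "hd (col_seg q s r j up) = (if up then j else col_top q s r j)"
    "last (col_seg q s r j up) = (if up then col_top q s r j else j)"
    by (simp_all add: col_seg_def hd_rev last_rev)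
qed

lemma rev_col_seg: "rev (col_seg q s r j up) = col_seg q s r j (\<not> up)"
  by (simp add: col_seg_def)

lemma step_run_col_seg: "0 < q \<Longrightarrow> step_run s (col_seg q s r j up)"
  by (simp add: col_seg_def column_def col_len_def step_run_arith_prog step_run_rev)

lemma linked_col_segs_upt:
  assumes q: "0 < q"
    and alt: "\<And>j. a \<le> j \<Longrightarrow> Suc j < b \<Longrightarrow> u (Suc j) \<longleftrightarrow> \<not> u j"
    and top: "\<And>j. a \<le> j \<Longrightarrow> Suc j < b \<Longrightarrow> u j \<Longrightarrow> Suc j \<noteq> r"
  shows "linked (map (\<lambda>j. col_seg q s r j (u j)) [a..<b])"
  using alt top
proof (induction b)
  case (Suc b)
  show ?case
  proof (cases "a < b")
    case True
    then obtain c where b: "b = Suc c" and "a \<le> c"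
      by (cases b) auto
    have "map (\<lambda>j. col_seg q s r j (u j)) [a..<Suc b]
        = map (\<lambda>j. col_seg q s r j (u j)) [a..<b] @ [col_seg q s r b (u b)]"
      using True by simp
    also have "linked \<dots>"
    proof (rule linked_append)
      show "linked (map (\<lambda>j. col_seg q s r j (u j)) [a..<b])"
        using Suc by simp
      have "last (map (\<lambda>j. col_seg q s r j (u j)) [a..<b]) = col_seg q s r c (u c)"
        using True b by (simp add: last_map)
      then show "absdiff (last (last (map (\<lambda>j. col_seg q s r j (u j)) [a..<b])))
          (hd (hd [col_seg q s r b (u b)])) = 1"
        using Suc.prems[of c] q b \<open>a \<le> c\<close> by (auto simp: hd_col_seg last_col_seg col_top_Suc)
    qed simp
    finally show ?thesis .
  qed (simp add: le_Suc_eq)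
qed simp

lemma linked_col_segs_rev_upt:
  assumes q: "0 < q"
    and alt: "\<And>j. a \<le> j \<Longrightarrow> Suc j < b \<Longrightarrow> u (Suc j) \<longleftrightarrow> \<not> u j"
    and top: "\<And>j. a \<le> j \<Longrightarrow> Suc j < b \<Longrightarrow> \<not> u j \<Longrightarrow> Suc j \<noteq> r"
  shows "linked (map (\<lambda>j. col_seg q s r j (u j)) (rev [a..<b]))"
proof -
  have "linked (map (\<lambda>j. col_seg q s r j (\<not> u j)) [a..<b])"
    using alt top by (intro linked_col_segs_upt[OF q]) auto
  then have "linked (rev (map rev (map (\<lambda>j. col_seg q s r j (\<not> u j)) [a..<b])))"
    by (intro linked_rev) (auto simp: eq_commute[of "[]"] col_seg_ne[OF q])
  then show ?thesis
    by (simp add: rev_map rev_col_seg o_def)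
qed

lemma mset_col_seg [simp]: "mset (col_seg q s r j up) = mset (column q s r j)"
  by (simp add: col_seg_def)

lemma mset_concat_col_segs:
  "mset (concat (map (\<lambda>j. col_seg q s r j (u j)) js)) = (\<Sum>j\<leftarrow>js. mset (column q s r j))"
  by (simp add: mset_concat o_def)

lemma mset_column_split: "j < r \<Longrightarrow> mset (column q s r j) = add_mset j (mset (arith_prog (j + s) s q))"
  by (simp add: column_def col_len_def arith_prog_Suc)

lemma mem_column_iff:
  assumes "j < s" "r < s"
  shows "x \<in> set (column q s r j) \<longleftrightarrow> x < q * s + r \<and> x mod s = j"
proof
  assume "x \<in> set (column q s r j)"
  then obtain i where i: "i < col_len q r j" "x = j + i * s"
    by (auto simp: column_def set_arith_prog mult.commute)
  have "x < q * s + r"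
  proof (cases "j < r")
    case True
    then have "i * s \<le> q * s" using i by (simp add: col_len_def)
    then show ?thesis using i True by linarith
  next
    case False
    then have "Suc i * s \<le> q * s" using i by (simp add: col_len_def del: mult_Suc)
    then show ?thesis using i assms by simp
  qed
  then show "x < q * s + r \<and> x mod s = j"
    using i assms by simp
next
  assume x: "x < q * s + r \<and> x mod s = j"
  define i where "i = x div s"
  have xi: "x = j + i * s"
    using x div_mult_mod_eq[of x s] by (simp add: i_def)
  have "i < col_len q r j"
  proof (cases "i < q")
    case False
    then have "q * s \<le> i * s" by simp
    then have "j < r" using x xi by linarith
    moreover have "i * s < Suc q * s" unfolding mult_Suc using x xi assms by linarith
    then have "i < Suc q" by (rule mult_less_cancel2[THEN iffD1, THEN conjunct2])
    ultimately show ?thesis by (simp add: col_len_def)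
  qed (simp add: col_len_def)
  then show "x \<in> set (column q s r j)"
    using xi by (auto simp: column_def set_arith_prog mult.commute)
qed

lemma sum_list_mset_columns:
  assumes "mset js = mset [0..<s]" "r < s"
  shows "(\<Sum>j\<leftarrow>js. mset (column q s r j)) = mset [0..<q * s + r]"
proof -
  have "(\<Sum>j\<leftarrow>js. mset (column q s r j)) = (\<Sum>j\<leftarrow>[0..<s]. mset (column q s r j))"
    by (simp only: sum_mset_sum_list[symmetric] mset_map assms(1))
  also have "\<dots> = mset [0..<q * s + r]"
  proof (rule multiset_eqI)
    fix x
    have "count (mset (column q s r j)) x = (if x < q * s + r \<and> x mod s = j then 1 else 0)"
      if "j < s" for j
      using mem_column_iff[OF that assms(2), where q = q and x = x] distinct_arith_prog[of s j "col_len q r j"] assms(2)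
      by (simp add: column_def distinct_count_atmost_1)
    then have "count (\<Sum>j\<leftarrow>[0..<s]. mset (column q s r j)) x
        = (\<Sum>j\<in>{0..<s}. if x < q * s + r \<and> x mod s = j then 1 else 0)"
      by (simp add: interv_sum_list_conv_sum_set_nat count_sum)
    also have "\<dots> = (if x < q * s + r then 1 else 0)"
      using assms(2) by (simp add: sum.delta)
    also have "\<dots> = count (mset [0..<q * s + r]) x"
      by simp
    finally show "count (\<Sum>j\<leftarrow>[0..<s]. mset (column q s r j)) x = count (mset [0..<q * s + r]) x" .
  qed
  finally show ?thesis .
qed

lemma upt_append: "a \<le> b \<Longrightarrow> b \<le> c \<Longrightarrow> [a..<b] @ [b..<c] = [a..<c]"
  by (metis le_add_diff_inverse upt_add_eq_append)

lemma mset_upt_rotate: "a \<le> b \<Longrightarrow> b \<le> c \<Longrightarrow> mset ([b..<c] @ [a..<b]) = mset [a..<c]"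
proof -
  assume "a \<le> b" "b \<le> c"
  then have "mset [a..<c] = mset [a..<b] + mset [b..<c]"
    by (simp only: upt_append[symmetric, of a b c] mset_append)
  then show ?thesis
    by (simp only: mset_append add.commute)
qed

lemma last_concat: "xs \<noteq> [] \<Longrightarrow> last xs \<noteq> [] \<Longrightarrow> last (concat xs) = last (last xs)"
  by (induction xs rule: rev_induct) auto

lemma ham_path_col_segs:
  assumes "0 < q" "r < s" "mset js = mset [0..<s]" "linked (col_segs q s r u js)"
  shows "ham_path s (q * s + r) (concat (col_segs q s r u js)) (s - 1) (q * s + r - s)"
proof -
  have "length js = s"
    using arg_cong[OF assms(3), of size] by simp
  moreover have "ham_path s (q * s + r) (concat (col_segs q s r u js))
      (length (col_segs q s r u js) - 1) (q * s + r - length (col_segs q s r u js))"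
    using assms by (intro ham_path_concat)
      (auto simp: step_run_col_seg mset_concat_col_segs sum_list_mset_columns)
  ultimately show ?thesis by simp
qed

section \<open>Boustrophedon paths\<close>

definition bous :: "nat \<Rightarrow> nat \<Rightarrow> nat \<Rightarrow> nat list" where
  "bous q s r = concat (col_segs q s r even [0..<s])"

lemma
  assumes "0 < q" "r < s" "even r" "odd s"
  shows ham_path_bous: "ham_path s (q * s + r) (bous q s r) (s - 1) (q * s + r - s)"
    and hd_bous: "hd (bous q s r) = 0"
    and last_bous: "last (bous q s r) = s * q - 1"
proof -
  have "linked (col_segs q s r even [0..<s])"
    using assms by (intro linked_col_segs_upt) auto
  then show "ham_path s (q * s + r) (bous q s r) (s - 1) (q * s + r - s)"
    unfolding bous_def using assms by (intro ham_path_col_segs) auto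
  have s: "[0..<s] = 0 # [1..<s]" "[0..<s] = [0..<s - 1] @ [s - 1]"
    using assms by (simp_all add: upt_conv_Cons upt_Suc_append[symmetric])
  show "hd (bous q s r) = 0"
    using assms col_seg_ne[OF assms(1)] by (subst bous_def, subst s(1)) (simp add: hd_col_seg)
  have "s \<le> s * q" using assms by simp
  then show "last (bous q s r) = s * q - 1"
    using assms col_seg_ne[OF assms(1)]
    by (subst bous_def, subst s(2)) (simp add: last_col_seg col_top_ge)
qed

definition bous_desc :: "nat \<Rightarrow> nat \<Rightarrow> nat \<Rightarrow> nat list" where
  "bous_desc q s r = concat (col_segs q s r even (rev [0..<s]))"

lemma
  assumes "0 < q" "r < s" "odd r"
  shows ham_path_bous_desc: "ham_path s (q * s + r) (bous_desc q s r) (s - 1) (q * s + r - s)"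
    and last_bous_desc: "last (bous_desc q s r) = s * q"
proof -
  have "linked (col_segs q s r even (rev [0..<s]))"
    using assms by (intro linked_col_segs_rev_upt) auto
  then show "ham_path s (q * s + r) (bous_desc q s r) (s - 1) (q * s + r - s)"
    unfolding bous_desc_def using assms by (intro ham_path_col_segs) auto
  have "rev [0..<s] = rev [1..<s] @ [0]"
    using assms by (simp add: upt_conv_Cons)
  then show "last (bous_desc q s r) = s * q"
    using assms col_seg_ne[OF assms(1)]
    by (subst bous_desc_def) (simp add: last_col_seg col_top_less odd_pos)
qed

definition bous_top_start :: "nat \<Rightarrow> nat \<Rightarrow> nat \<Rightarrow> nat list" where
  "bous_top_start q s r =
     concat ([col_seg q s r (s - 2) False, col_seg q s r (s - 1) True] @ col_segs q s r odd [0..<s - 2])"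

lemma
  assumes q: "0 < q" and r: "odd r" "r + 2 \<le> s"
  shows ham_path_bous_top_start:
      "ham_path s (q * s + r) (bous_top_start q s r) (s - 1) (q * s + r - s)"
    and hd_bous_top_start: "hd (bous_top_start q s r) = s * q - 2"
proof -
  have s: "3 \<le> s" "s \<le> s * q"
    using r q by (presburger, simp)
  let ?js = "[s - 2, s - 1] @ [0..<s - 2]"
  let ?u = "\<lambda>j. j = s - 1 \<or> j < s - 2 \<and> odd j"
  have "s - 2 \<noteq> s - 1" "\<forall>j < s - 2. j \<noteq> s - 1"
    using s by auto
  then have segs: "[col_seg q s r (s - 2) False, col_seg q s r (s - 1) True] @ col_segs q s r odd [0..<s - 2]
      = col_segs q s r ?u ?js"
    by simp
  have "linked (col_segs q s r odd [0..<s - 2])"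
    using q r by (intro linked_col_segs_upt) auto
  moreover have "hd (hd (col_segs q s r odd [0..<s - 2])) = s * q"
    using s q r by (simp add: upt_conv_Cons hd_col_seg col_top_less odd_pos)
  moreover have "absdiff (s - 2) (s - 1) = 1" "absdiff (s - 1 + s * q - s) (s * q) = 1"
    using s by (simp_all add: absdiff_def)
  ultimately have "linked (col_segs q s r ?u ?js)"
    using q r s unfolding segs[symmetric]
    by (intro linked_append) (auto simp: hd_col_seg last_col_seg col_top_less col_top_ge)
  moreover have "[s - 2..<s] = [s - 2, s - 1]"
    using s by (cases s) (auto simp: upt_rec)
  then have "mset ?js = mset [0..<s]"
    using s mset_upt_rotate[of 0 "s - 2" s] by simp
  ultimately show "ham_path s (q * s + r) (bous_top_start q s r) (s - 1) (q * s + r - s)"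
    unfolding bous_top_start_def segs using q r by (intro ham_path_col_segs) auto
  show "hd (bous_top_start q s r) = s * q - 2"
    unfolding bous_top_start_def using q s r by (simp add: hd_col_seg col_seg_ne col_top_ge)
qed

text \<open>The bottom entry \<open>j\<close> of column \<open>j\<close> is visited only after the rest of that column and
column \<open>j + 1\<close>, which costs one extra unit step.\<close>
definition extra_step_segs :: "nat \<Rightarrow> nat \<Rightarrow> nat \<Rightarrow> nat list list" where
  "extra_step_segs q s j =
     [arith_prog (j + s) s q, col_seg q s (j + 3) (j + 1) False, [j]]
     @ col_segs q s (j + 3) even (rev [0..<j]) @ col_segs q s (j + 3) odd (rev [j + 2..<s])"

lemma linked_extra_step_segs:
  assumes q: "0 < q" and j: "odd j" "j + 3 < s" and s: "odd s"
  shows "linked (extra_step_segs q s j)"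
proof -
  let ?r = "j + 3"
  let ?H = "[arith_prog (j + s) s q, col_seg q s ?r (j + 1) False, [j]]"
  let ?A = "col_segs q s ?r even (rev [0..<j])" and ?C = "col_segs q s ?r odd (rev [j + 2..<s])"
  have sq: "s \<le> s * q" "s + s * (q - 1) = s * q"
    using q by (simp, cases q, simp_all)
  have A: "?A = col_seg q s ?r (j - 1) True # col_segs q s ?r even (rev [0..<j - 1])"
    "last ?A = col_seg q s ?r 0 True"
    using j odd_pos[OF j(1)] by (cases j, simp_all add: last_map last_rev)
  have C: "?C = col_seg q s ?r (s - 1) False # col_segs q s ?r odd (rev [j + 2..<s - 1])"
    using j s by (cases s) simp_all
  have "linked (?H @ ?A @ ?C)"
  proof (rule linked_append)
    show "linked ?H"
      using q sq by (simp add: last_arith_prog hd_col_seg last_col_seg col_top_less absdiff_def)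
    show "linked (?A @ ?C)"
    proof (rule linked_append)
      show "linked ?A" "linked ?C"
        using q j by (auto intro!: linked_col_segs_rev_upt)
      show "absdiff (last (last ?A)) (hd (hd ?C)) = 1"
        using q j sq unfolding A(2) C by (simp add: hd_col_seg last_col_seg col_top_less col_top_ge absdiff_def)
    qed
    have "absdiff j (j - 1) = 1"
      using j by (auto simp: absdiff_def elim!: oddE)
    then show "absdiff (last (last ?H)) (hd (hd (?A @ ?C))) = 1"
      using q A(1) by (simp add: hd_col_seg)
  qed
  then show ?thesis
    unfolding extra_step_segs_def .
qed

definition bous_extra_step :: "nat \<Rightarrow> nat \<Rightarrow> nat \<Rightarrow> nat list" where
  "bous_extra_step q s j = concat (extra_step_segs q s j)"

lemma
  assumes q: "0 < q" and j: "odd j" "j + 3 < s" and s: "odd s"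
  shows ham_path_bous_extra_step:
      "ham_path s (q * s + (j + 3)) (bous_extra_step q s j) s (q * s + (j + 3) - s - 1)"
    and last_bous_extra_step: "last (bous_extra_step q s j) = q * s + (j + 3) - 1"
proof -
  let ?r = "j + 3"
  let ?js = "j # (j + 1) # rev [0..<j] @ rev [j + 2..<s]"
  have "[j..<s] = j # (j + 1) # [j + 2..<s]"
    using j by (simp add: upt_conv_Cons)
  then have "mset ?js = mset ([0..<j] @ [j..<s])"
    by (simp del: mset_upt)
  also have "\<dots> = mset [0..<s]"
    using j by (simp only: upt_append)
  finally have "mset ?js = mset [0..<s]" .
  then have ms: "mset (concat (extra_step_segs q s j)) = mset [0..<q * s + ?r]"
    using j sum_list_mset_columns[of ?js s ?r q]
    by (simp add: extra_step_segs_def mset_concat_col_segs mset_column_split ac_simps add_mset_commute)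
  have runs: "\<forall>g \<in> set (extra_step_segs q s j). step_run s g"
    using q by (auto simp: extra_step_segs_def step_run_col_seg step_run_arith_prog step_run_singleton)
  have "length (extra_step_segs q s j) = s + 1"
    using j by (simp add: extra_step_segs_def)
  then show "ham_path s (q * s + ?r) (bous_extra_step q s j) s (q * s + ?r - s - 1)"
    using ham_path_concat[OF linked_extra_step_segs[OF assms] runs ms]
    by (simp add: bous_extra_step_def)
  have "rev [j + 2..<s] = rev [j + 3..<s] @ [j + 2]"
    using j by (subst upt_conv_Cons) (auto simp: numeral_3_eq_3)
  then show "last (bous_extra_step q s j) = q * s + ?r - 1"
    using q j col_seg_ne[OF q]
    by (simp add: bous_extra_step_def extra_step_segs_def last_concat last_col_seg col_top_less)
qed

definition bous_wrap :: "nat \<Rightarrow> nat \<Rightarrow> nat \<Rightarrow> nat list" where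
  "bous_wrap q s r = concat (col_segs q s r even (rev [0..<r]) @ col_segs q s r odd (rev [r..<s]))"

lemma
  assumes q: "0 < q" and r: "odd r" "r < s" and s: "odd s"
  shows ham_path_bous_wrap: "ham_path s (q * s + r) (bous_wrap q s r) (s - 1) (q * s + r - s)"
    and last_bous_wrap: "last (bous_wrap q s r) = r + s * q - s"
proof -
  let ?A = "col_segs q s r even (rev [0..<r])" and ?C = "col_segs q s r odd (rev [r..<s])"
  let ?js = "rev [0..<r] @ rev [r..<s]" and ?u = "\<lambda>j. if j < r then even j else odd j"
  have sq: "s \<le> s * q" "0 < s * q" using q r by simp_all
  have "last ?A = col_seg q s r 0 True" "?C = col_seg q s r (s - 1) False # col_segs q s r odd (rev [r..<s - 1])"
    using r s odd_pos[OF r(1)] by (simp_all add: last_map last_rev, cases s, simp_all)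
  then have "absdiff (last (last ?A)) (hd (hd ?C)) = 1"
    using q r sq absdiff_pred[OF sq(2)] by (simp add: hd_col_seg last_col_seg col_top_less col_top_ge odd_pos)
  then have "linked (?A @ ?C)"
    using q r by (intro linked_append) (auto intro!: linked_col_segs_rev_upt)
  moreover have segs: "?A @ ?C = col_segs q s r ?u ?js"
    by simp
  moreover have "mset ?js = mset [0..<s]"
    using r mset_upt_rotate[of 0 r s] by (simp add: ac_simps)
  ultimately show "ham_path s (q * s + r) (bous_wrap q s r) (s - 1) (q * s + r - s)"
    unfolding bous_wrap_def segs using q r by (intro ham_path_col_segs) simp_all
  have "rev [r..<s] = rev [Suc r..<s] @ [r]"
    using r by (simp add: upt_conv_Cons)
  then show "last (bous_wrap q s r) = r + s * q - s"
    using q r col_seg_ne[OF q] odd_pos[OF r(1)]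
    by (simp add: bous_wrap_def last_concat last_col_seg col_top_ge)
qed

text \<open>As in \<open>extra_step_segs\<close>, splitting off the bottom entry of column \<open>r - 2\<close> gains one unit step.\<close>
definition wrap_extra_step_segs :: "nat \<Rightarrow> nat \<Rightarrow> nat \<Rightarrow> nat list list" where
  "wrap_extra_step_segs q s r =
     col_segs q s r even [r..<s] @ col_segs q s r odd [0..<r - 2]
     @ [[r - 2], col_seg q s r (r - 1) True, rev (arith_prog (r - 2 + s) s q)]"

lemma linked_wrap_extra_step_segs:
  assumes q: "0 < q" and r: "odd r" "3 \<le> r" "r < s" and s: "odd s"
  shows "linked (wrap_extra_step_segs q s r)"
proof -
  let ?A = "col_segs q s r even [r..<s]" and ?B = "col_segs q s r odd [0..<r - 2]"
  let ?C = "[[r - 2], col_seg q s r (r - 1) True, rev (arith_prog (r - 2 + s) s q)]"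
  have sq: "s \<le> s * q" "0 < s * q" "s + s * (q - 1) = s * q"
    using q r by (simp, simp, cases q, simp_all)
  have A: "last ?A = col_seg q s r (s - 1) True"
    using r s by (simp add: last_map)
  have "even (r - 3)"
    using r by simp
  then have B: "?B = col_seg q s r 0 False # col_segs q s r odd [1..<r - 2]" "last ?B = col_seg q s r (r - 3) False"
    using r by (simp_all add: upt_conv_Cons[of 0] last_map numeral_3_eq_3)
  have "last (arith_prog (r - 2 + s) s q) = r - 2 + s * q"
    using q sq by (simp add: last_arith_prog)
  then have "linked ?C"
    using q r by (simp add: hd_col_seg last_col_seg col_top_less hd_rev absdiff_def) arith
  moreover have "linked ?B"
    using q r by (intro linked_col_segs_upt) auto
  moreover have "absdiff (last (last ?B)) (hd (hd ?C)) = 1"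
    using q r unfolding B(2) by (simp add: last_col_seg absdiff_def) arith
  ultimately have BC: "linked (?B @ ?C)"
    by (simp add: linked_append)
  have "linked ?A"
    using q r by (intro linked_col_segs_upt) auto
  moreover note BC
  moreover have "absdiff (last (last ?A)) (hd (hd (?B @ ?C))) = 1"
    using q r sq absdiff_pred(2)[OF sq(2)] unfolding A B(1)
    by (simp add: hd_col_seg last_col_seg col_top_less col_top_ge)
  ultimately show ?thesis
    unfolding wrap_extra_step_segs_def by (rule linked_append)
qed

definition bous_wrap_extra_step :: "nat \<Rightarrow> nat \<Rightarrow> nat \<Rightarrow> nat list" where
  "bous_wrap_extra_step q s r = concat (wrap_extra_step_segs q s r)"

lemma
  assumes q: "0 < q" and r: "odd r" "3 \<le> r" "r < s" and s: "odd s"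
  shows ham_path_bous_wrap_extra_step:
      "ham_path s (q * s + r) (bous_wrap_extra_step q s r) s (q * s + r - s - 1)"
    and hd_bous_wrap_extra_step: "hd (bous_wrap_extra_step q s r) = r + s * q - s"
proof -
  let ?js = "[r..<s] @ [0..<r - 2] @ [r - 2, r - 1]"
  have "[r - 2..<r] = [r - 2, r - 1]"
    using r by (cases r) (auto simp: upt_rec)
  then have "mset ?js = mset [0..<s]"
    using r mset_upt_rotate[of 0 r s] upt_append[of 0 "r - 2" r] by (simp del: mset_upt add: ac_simps)
  then have ms: "mset (concat (wrap_extra_step_segs q s r)) = mset [0..<q * s + r]"
    using r sum_list_mset_columns[of ?js s r q] mset_column_split[of "r - 2" r q s]
    by (simp add: wrap_extra_step_segs_def mset_concat_col_segs ac_simps add_mset_commute)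
  have runs: "\<forall>g \<in> set (wrap_extra_step_segs q s r). step_run s g"
    using q by (auto simp: wrap_extra_step_segs_def step_run_col_seg step_run_rev step_run_arith_prog
        step_run_singleton)
  have "length (wrap_extra_step_segs q s r) = s + 1"
    using r by (simp add: wrap_extra_step_segs_def)
  then show "ham_path s (q * s + r) (bous_wrap_extra_step q s r) s (q * s + r - s - 1)"
    using ham_path_concat[OF linked_wrap_extra_step_segs[OF assms] runs ms]
    by (simp add: bous_wrap_extra_step_def)
  show "hd (bous_wrap_extra_step q s r) = r + s * q - s"
    using q r col_seg_ne[OF q]
    by (simp add: bous_wrap_extra_step_def wrap_extra_step_segs_def upt_conv_Cons hd_concat hd_col_seg col_top_ge)
qed

lemma ham_path_to_top:
  assumes s: "odd s" and N: "s \<le> N" and r: "even (N mod s) \<or> N mod s = 1"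
  obtains p where "ham_path s N p (s - 1) (N - s)" "last p = N - 1"
proof -
  define q r where "q = N div s" and "r = N mod s"
  have N_eq: "N = q * s + r" and "r < s" and q: "0 < q"
    using s N by (auto simp: q_def r_def odd_pos div_greater_zero_iff)
  show ?thesis
  proof (cases "even r")
    case True
    have "hd (bous q s r) = 0"
      using hd_bous[OF q \<open>r < s\<close> True s] .
    moreover have "length (bous q s r) = N"
      using ham_path_length[OF ham_path_bous[OF q \<open>r < s\<close> True s]] N_eq by simp
    then have "bous q s r \<noteq> []"
      using N odd_pos[OF s] by auto
    ultimately show ?thesis
      using that ham_path_rev[OF ham_path_reflect[OF ham_path_bous[OF q \<open>r < s\<close> True s]]] N_eq
      by (simp add: last_rev hd_map)
  next
    case False
    then have "r = 1" using r unfolding r_def by simp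
    then show ?thesis
      using that ham_path_bous_desc[OF q \<open>r < s\<close>] last_bous_desc[OF q \<open>r < s\<close>] N_eq
      by (simp add: mult.commute)
  qed
qed

lemma ham_path_to_top_extra_step:
  assumes s: "odd s" and N: "s \<le> N" and r: "odd (N mod s)" "N mod s \<noteq> 1"
  obtains p where "ham_path s (N + 1) p s (N - s)" "last p = N"
proof -
  define q j where "q = N div s" and "j = N mod s - 2"
  have "N mod s < s"
    using s by (simp add: odd_pos)
  moreover have "\<forall>x y :: nat. odd x \<longrightarrow> odd y \<longrightarrow> x \<noteq> 1 \<longrightarrow> x \<noteq> y - 1 \<and> 3 \<le> x"
    by presburger
  ultimately have "N mod s \<noteq> s - 1" "3 \<le> N mod s"
    using s r by blast+
  then have j: "odd j" "j + 3 < s"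
    using r \<open>N mod s < s\<close> unfolding j_def by auto
  have q: "0 < q"
    using N s unfolding q_def by (simp add: odd_pos div_greater_zero_iff)
  have N_eq: "N + 1 = q * s + (j + 3)"
    using \<open>3 \<le> N mod s\<close> unfolding q_def j_def by simp
  show ?thesis
    using that ham_path_bous_extra_step[OF q j s] last_bous_extra_step[OF q j s]
    unfolding N_eq[symmetric] by simp
qed

lemma ham_path_ending_at_top:
  assumes s: "odd s" and n: "s + \<sigma> \<le> n"
    and r: "0 < \<sigma> \<or> even ((n - \<sigma>) mod s) \<or> (n - \<sigma>) mod s = 1"
  obtains p where "ham_path s n p (s - 1 + \<sigma>) (n - s - \<sigma>)" "last p = n - 1"
proof -
  define N where "N = n - \<sigma>"
  have N: "s \<le> N" "0 < N"
    using n odd_pos[OF s] unfolding N_def by auto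
  \<comment> \<open>An odd residue other than 1 costs one extra unit step, taken from the final run.\<close>
  consider (to_top) p where "ham_path s N p (s - 1) (N - s)" "last p = N - 1"
    | (extra_step) p where "ham_path s (N + 1) p s (N - s)" "last p = N" "0 < \<sigma>"
    using ham_path_to_top[OF s N(1)] ham_path_to_top_extra_step[OF s N(1)] r
    unfolding N_def by (metis add_diff_cancel_right')
  then show ?thesis
  proof cases
    case to_top
    have "N \<le> n"
      unfolding N_def by simp
    then obtain p' where "ham_path s n p' (s - 1 + (n - N)) (N - s)" "last p' = n - 1"
      by (rule ham_path_extend_upt[OF to_top N(2)])
    then show ?thesis
      using that n unfolding N_def by (simp add: ac_simps)
  next
    case extra_step
    have "last p = N + 1 - 1" "0 < N + 1" "N + 1 \<le> n"
      using extra_step(2,3) n unfolding N_def by simp_all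
    then obtain p' where "ham_path s n p' (s + (n - (N + 1))) (N - s)" "last p' = n - 1"
      by (rule ham_path_extend_upt[OF extra_step(1)])
    moreover have "s + (n - (N + 1)) = s - 1 + \<sigma>" "N - s = n - s - \<sigma>"
      using extra_step(3) n odd_pos[OF s] unfolding N_def by auto
    ultimately show ?thesis
      using that by simp
  qed
qed

section \<open>The three ranges of b\<close>

lemma split_halves:
  obtains x y :: nat where "x + y = v" "x = y \<or> x = Suc y"
proof (cases "even v")
  case True
  then obtain k where "v = 2 * k" by blast
  then show ?thesis using that[of k k] by simp
next
  case False
  then obtain k where "v = 2 * k + 1" using oddE by blast
  then show ?thesis using that[of "Suc k" k] by simp
qed

lemma has_linear_realization_b_ge_2s:
  assumes s: "odd s" and c: "0 < c" and b: "2 * s \<le> b"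
  shows "has_linear_realization (mset_12t b (2 * s) c)"
proof -
  obtain m n where mn: "m + n = b + c + 2" "m = n \<or> m = Suc n"
    by (rule split_halves)
  obtain \<sigma>O \<sigma>E where \<sigma>: "\<sigma>O + \<sigma>E = b + 2 - 2 * s" "\<sigma>O = \<sigma>E \<or> \<sigma>O = Suc \<sigma>E"
    by (rule split_halves)
  have bounds: "s + \<sigma>E \<le> m" "s + \<sigma>O \<le> n" "0 < \<sigma>E" "0 < \<sigma>O"
    using mn \<sigma> b c by linarith+
  obtain pe where E: "ham_path s m pe (s - 1 + \<sigma>E) (m - s - \<sigma>E)" "last pe = m - 1"
    using ham_path_ending_at_top[OF s bounds(1)] bounds(3) by blast
  obtain po where O: "ham_path s n po (s - 1 + \<sigma>O) (n - s - \<sigma>O)" "last po = n - 1"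
    using ham_path_ending_at_top[OF s bounds(2)] bounds(4) by blast
  have "(s - 1 + \<sigma>E) + (s - 1 + \<sigma>O) = b" "(m - s - \<sigma>E) + (n - s - \<sigma>O) = c"
    using \<sigma> odd_pos[OF s] b bounds mn by linarith+
  then show ?thesis
    using has_linear_realization_top_paths[OF E O mn(2)] bounds by simp
qed

lemma has_linear_realization_b_eq_2s_minus_1:
  assumes s: "odd s" and c: "odd c"
  shows "has_linear_realization (mset_12t (2 * s - 1) (2 * s) c)"
proof -
  obtain k where k: "c = 2 * k + 1"
    using c oddE by blast
  define n where "n = s + k + 1"
  define q r where "q = n div s" and "r = n mod s"
  have n: "n = q * s + r" "r < s" "0 < q" "s + 1 \<le> n"
    using s by (auto simp: n_def q_def r_def odd_pos div_greater_zero_iff)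
  show ?thesis
  proof (cases "even r \<or> r = 1")
    case True
    obtain pe where E: "ham_path s n pe (s - 1 + 0) (n - s - 0)" "last pe = n - 1"
      using ham_path_ending_at_top[OF s, of 0 n] True n(4) unfolding r_def by auto
    obtain po where O: "ham_path s n po (s - 1 + 1) (n - s - 1)" "last po = n - 1"
      using ham_path_ending_at_top[OF s n(4)] by blast
    have "(s - 1 + 0) + (s - 1 + 1) = 2 * s - 1" "(n - s - 0) + (n - s - 1) = c"
      using s k n(4) unfolding n_def by simp_all
    then show ?thesis
      using has_linear_realization_top_paths[OF E O] n(4) by (simp add: mult_2)
  next
    case False
    then have r: "odd r" "3 \<le> r"
      by presburger+
    have "has_linear_realization (mset_12t ((s - 1) + s) (2 * s) ((q * s + r - s) + (q * s + r - s - 1)))"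
    proof (rule has_linear_realization_interleave)
      show "ham_path s (q * s + r) (bous_wrap q s r) (s - 1) (q * s + r - s)"
        by (rule ham_path_bous_wrap[OF n(3) r(1) n(2) s])
      show "ham_path s (q * s + r) (bous_wrap_extra_step q s r) s (q * s + r - s - 1)"
        by (rule ham_path_bous_wrap_extra_step[OF n(3) r n(2) s])
      show "absdiff (2 * last (bous_wrap q s r)) (2 * hd (bous_wrap_extra_step q s r) + 1) = 1"
        using last_bous_wrap[OF n(3) r(1) n(2) s] hd_bous_wrap_extra_step[OF n(3) r n(2) s]
        by (simp add: absdiff_def)
    qed (use r in simp_all)
    moreover have "(s - 1) + s = 2 * s - 1" "(q * s + r - s) + (q * s + r - s - 1) = c"
      using s k n unfolding n_def by simp_all
    ultimately show ?thesis
      by simp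
  qed
qed

lemma has_linear_realization_b_eq_2s_minus_2:
  assumes s: "odd s" "3 \<le> s" and c: "c mod (2 * s) mod 4 = 3"
  shows "has_linear_realization (mset_12t (2 * s - 2) (2 * s) c)"
proof -
  define k where "k = c div (2 * s)"
  define q where "q = k + 1"
  define f where "f = c mod (2 * s) div 4"
  have f: "c mod (2 * s) = 4 * f + 3"
    using c div_mult_mod_eq[of "c mod (2 * s)" 4] unfolding f_def by linarith
  obtain g where g: "s = 2 * g + 1"
    using s(1) oddE by blast
  have c_eq: "c = 2 * (k * s) + 4 * f + 3"
    using f div_mult_mod_eq[of c "2 * s"] unfolding k_def by (simp add: mult.commute)
  have "c mod (2 * s) < 2 * s"
    using s by simp
  then have "4 * f + 3 < 4 * g + 2"
    using f g by linarith
  \<comment> \<open>The two halves get the residues \<open>2 * f + 2\<close> and \<open>2 * f + 1\<close>, as \<open>bous\<close> and \<open>bous_top_start\<close> require.\<close>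
  then have r: "2 * f + 2 < s" "even (2 * f + 2)" "odd (2 * f + 1)" "2 * f + 1 + 2 \<le> s"
    using g by presburger+
  have q: "0 < q" "3 \<le> s * q"
    using s by (simp_all add: q_def)
  have "has_linear_realization
      (mset_12t ((s - 1) + (s - 1)) (2 * s) ((q * s + (2 * f + 2) - s) + (q * s + (2 * f + 1) - s)))"
  proof (rule has_linear_realization_interleave)
    show "ham_path s (q * s + (2 * f + 2)) (bous q s (2 * f + 2)) (s - 1) (q * s + (2 * f + 2) - s)"
      by (rule ham_path_bous[OF q(1) r(1,2) s(1)])
    show "ham_path s (q * s + (2 * f + 1)) (bous_top_start q s (2 * f + 1)) (s - 1) (q * s + (2 * f + 1) - s)"
      by (rule ham_path_bous_top_start[OF q(1) r(3,4)])
    show "absdiff (2 * last (bous q s (2 * f + 2))) (2 * hd (bous_top_start q s (2 * f + 1)) + 1) = 1"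
      using last_bous[OF q(1) r(1,2) s(1)] hd_bous_top_start[OF q(1) r(3,4)] q(2)
      by (simp add: absdiff_def) arith
  qed (use q s in simp_all)
  moreover have "(s - 1) + (s - 1) = 2 * s - 2"
    "(q * s + (2 * f + 2) - s) + (q * s + (2 * f + 1) - s) = c"
    using s c_eq unfolding q_def by (simp_all add: algebra_simps)
  ultimately show ?thesis
    by simp
qed

theorem proposition3p11:
  fixes t c :: nat
  assumes "t \<ge> 6" and "t mod 4 = 2"
    and "c > 0" and "odd c"
  shows "((c mod t) mod 4 = 1 \<longrightarrow> (\<forall>b \<ge> t - 1. has_linear_realization (mset_12t b t c))) \<and>
         ((c mod t) mod 4 = 3 \<longrightarrow> (\<forall>b \<ge> t - 2. has_linear_realization (mset_12t b t c)))"
proof -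
  define s where "s = t div 2"
  have s: "odd s" "3 \<le> s" and t: "t = 2 * s"
    using assms(1,2) unfolding s_def by presburger+
  have large: "has_linear_realization (mset_12t b t c)" if "t - 1 \<le> b" for b
  proof (cases "b = t - 1")
    case True
    then show ?thesis using has_linear_realization_b_eq_2s_minus_1[OF s(1) assms(4)] t by simp
  next
    case False
    then show ?thesis using has_linear_realization_b_ge_2s[OF s(1) assms(3)] that t by simp
  qed
  have small: "has_linear_realization (mset_12t (t - 2) t c)" if "(c mod t) mod 4 = 3"
    using has_linear_realization_b_eq_2s_minus_2[OF s] that t by simp
  show ?thesis
  proof (intro conjI impI allI)
    fix b assume "t - 1 \<le> b"
    then show "has_linear_realization (mset_12t b t c)"
      by (rule large)
  next
    fix b assume "(c mod t) mod 4 = 3" "t - 2 \<le> b"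
    then show "has_linear_realization (mset_12t b t c)"
      using large small by (cases "b = t - 2") auto
  qed
qed

end
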